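(* Let $A\in\mathbb{R}^{n\times n}$ be a lower Hessenberg invertible M-matrix. Define the Gauss--Seidel splitting $M_{GS}=\operatorname{tril}(A)$, $N_{GS}=M_{GS}-A$, $P_{GS}=M_{GS}^{-1}N_{GS}$; the anti-Gauss--Seidel splitting $M_{AGS}=\operatorname{triu}(A)$, $N_{AGS}=M_{AGS}-A$, $P_{AGS}=M_{AGS}^{-1}N_{AGS}$; and, for $S$ the stair matrix of first order or of second order generated by $A$, the staircase splitting $M_S=S$, $N_S=M_S-A$, $P_S=M_S^{-1}N_S$. Then \[ \rho(P_{GS}) \geq \rho(P_S) \geq \rho(P_{AGS}). \]
   Context: $A$ is lower Hessenberg if $A_{ij}=0$ whenever $j>i+1$. $\operatorname{tril}(A)$ (resp. $\operatorname{triu}(A)$) is the lower (resp. upper) triangular part of $A$ including the diagonal. Let $\operatorname{tridiag}(A)$ be the tridiagonal matrix keeping the subdiagonal, diagonal and superdiagonal entries of $A$ and zeroing the rest. The stair matrix of first order generated by $A$ is obtained from $\operatorname{tridiag}(A)$ by setting the entries $(i,i-1)$ and $(i,i+1)$ (when they exist) to zero for every odd $i$; the stair matrix of second order is obtained from $\operatorname{tridiag}(A)$ by setting the entries $(i,i-1)$ and $(i,i+1)$ (when they exist) to zero for every even $i$. $\rho(\cdot)$ denotes the spectral radius. *)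

theory Defs
  imports "Jordan_Normal_Form.Spectral_Radius" "Jordan_Normal_Form.Gauss_Jordan_Elimination"
begin

definition rho :: "real mat \<Rightarrow> real" where
  "rho A = spectral_radius (map_mat complex_of_real A)"

definition lower_hessenberg :: "real mat \<Rightarrow> bool" where
  "lower_hessenberg A \<longleftrightarrow> (\<forall>i<dim_row A. \<forall>j<dim_col A. j > i + 1 \<longrightarrow> A $$ (i,j) = 0)"

definition nonsingular_M_matrix :: "real mat \<Rightarrow> bool" where
  "nonsingular_M_matrix A \<longleftrightarrow> (\<exists>n s B. A \<in> carrier_mat n n \<and> B \<in> carrier_mat n n \<and>
      (\<forall>i<n. \<forall>j<n. B $$ (i,j) \<ge> 0) \<and> A = s \<cdot>\<^sub>m 1\<^sub>m n - B \<and> rho B < s)"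

definition tril :: "real mat \<Rightarrow> real mat" where
  "tril A = mat (dim_row A) (dim_col A) (\<lambda>(i,j). if j \<le> i then A $$ (i,j) else 0)"

definition triu :: "real mat \<Rightarrow> real mat" where
  "triu A = mat (dim_row A) (dim_col A) (\<lambda>(i,j). if i \<le> j then A $$ (i,j) else 0)"

(* 0-based indices; row i (0-based) is row Suc i in the paper's 1-based numbering *)
definition tridiag :: "real mat \<Rightarrow> real mat" where
  "tridiag A = mat (dim_row A) (dim_col A)
     (\<lambda>(i,j). if i = j \<or> j = i + 1 \<or> i = j + 1 then A $$ (i,j) else 0)"

definition stair1 :: "real mat \<Rightarrow> real mat" where
  "stair1 A = mat (dim_row A) (dim_col A)
     (\<lambda>(i,j). if i \<noteq> j \<and> odd (Suc i) then 0 else tridiag A $$ (i,j))"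

definition stair2 :: "real mat \<Rightarrow> real mat" where
  "stair2 A = mat (dim_row A) (dim_col A)
     (\<lambda>(i,j). if i \<noteq> j \<and> even (Suc i) then 0 else tridiag A $$ (i,j))"

definition iter_mat :: "real mat \<Rightarrow> real mat \<Rightarrow> real mat" where
  "iter_mat M A = the (mat_inverse M) * (M - A)"

end

theory Submission
  imports Defs
begin

(* Let the nonsingular M-matrix be A = s I - B. For a pattern K containing the diagonal, keeping
   the K-entries of A gives a regular splitting A = M - N: the negative part u of any x with
   M x >= 0 would satisfy s u <= B u, so M is monotone, M^-1 >= 0, N >= 0, P = M^-1 N >= 0 and
   rho(P) < 1. Gauss-Seidel, anti-Gauss-Seidel and both staircase splittings are of this kind.
   Let lam = rho(P_Y) = |e| for an eigenvalue e with eigenvector v. Then y = |v| satisfies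
   lam M_Y y <= N_Y y, i.e. sum_j lam^[K_Y i j] a_ij y_j <= 0 in every row i. Rescaling
   z_j = lam^(p j) y_j turns this into lam M_X z <= N_X z, hence lam z <= P_X z and
   lam <= rho(P_X) by the Collatz-Wielandt bound, as soon as
   [K_X i j] + p j <= [K_Y i j] + p i for all nonzero off-diagonal a_ij. For lower Hessenberg A
   only j <= i + 1 matters, and p i = i div 2 or (i + 1) div 2 does the job. *)

section \<open>Nonnegative matrices and the Collatz--Wielandt bound\<close>

definition nonneg_mat :: "'a :: {zero, ord} mat \<Rightarrow> bool" where
  "nonneg_mat P \<longleftrightarrow> (\<forall>i<dim_row P. \<forall>j<dim_col P. P $$ (i,j) \<ge> 0)"

lemma less_eq_vecI:
  "dim_vec u = n \<Longrightarrow> dim_vec w = n \<Longrightarrow> (\<And>i. i < n \<Longrightarrow> u $ i \<le> w $ i) \<Longrightarrow> u \<le> w"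
  unfolding less_eq_vec_def by simp

lemma less_eq_vecD: "u \<le> w \<Longrightarrow> i < dim_vec w \<Longrightarrow> u $ i \<le> w $ i"
  unfolding less_eq_vec_def by simp

lemma index_mult_mat_vec_sum:
  assumes "M \<in> carrier_mat n m" "x \<in> carrier_vec m" "i < n"
  shows "(M *\<^sub>v x) $ i = (\<Sum>j<m. M $$ (i,j) * x $ j)"
  using assms by (auto simp: scalar_prod_def lessThan_atLeast0 intro!: sum.cong)

lemma nonneg_mat_mult_vec_mono:
  fixes P :: "'a :: ordered_semiring_0 mat"
  assumes P: "P \<in> carrier_mat n m" "nonneg_mat P" and le: "u \<le> w" and w: "w \<in> carrier_vec m"
  shows "P *\<^sub>v u \<le> P *\<^sub>v w"
proof -
  have u: "u \<in> carrier_vec m" using le w unfolding less_eq_vec_def carrier_vec_def by simp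
  have "(P *\<^sub>v u) $ i \<le> (P *\<^sub>v w) $ i" if i: "i < n" for i
  proof -
    have "(\<Sum>j<m. P $$ (i,j) * u $ j) \<le> (\<Sum>j<m. P $$ (i,j) * w $ j)"
      using P le w i by (intro sum_mono mult_left_mono) (auto simp: nonneg_mat_def less_eq_vec_def)
    then show ?thesis
      by (simp only: index_mult_mat_vec_sum[OF P(1) u i] index_mult_mat_vec_sum[OF P(1) w i])
  qed
  then show ?thesis using P(1) unfolding less_eq_vec_def by simp
qed

lemma nonneg_mat_mult_vec_nonneg:
  fixes P :: "'a :: ordered_semiring_0 mat"
  assumes P: "P \<in> carrier_mat n m" "nonneg_mat P" and w: "w \<in> carrier_vec m" "0\<^sub>v m \<le> w"
  shows "0\<^sub>v n \<le> P *\<^sub>v w"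
  using nonneg_mat_mult_vec_mono[OF P w(2) w(1)] P(1) by (simp add: less_eq_vec_def)

lemma nonneg_mat_mult:
  fixes P Q :: "'a :: ordered_semiring_0 mat"
  assumes "P \<in> carrier_mat n m" "Q \<in> carrier_mat m k" "nonneg_mat P" "nonneg_mat Q"
  shows "nonneg_mat (P * Q)"
  using assms unfolding nonneg_mat_def
  by (auto simp: scalar_prod_def intro!: sum_nonneg mult_nonneg_nonneg)

lemma nonneg_mat_pow:
  fixes P :: "'a :: ordered_semiring_1 mat"
  assumes P: "P \<in> carrier_mat n n" "nonneg_mat P"
  shows "nonneg_mat (P ^\<^sub>m k)"
proof (induction k)
  case 0
  show ?case by (simp add: nonneg_mat_def)
next
  case (Suc k)
  then show ?case using nonneg_mat_mult[of "P ^\<^sub>m k" n n P n] P by simp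
qed

lemma smult_vec_left_mono:
  fixes a :: "'a :: ordered_semiring_0"
  assumes "0 \<le> a" "u \<le> w"
  shows "a \<cdot>\<^sub>v u \<le> a \<cdot>\<^sub>v w"
  using assms by (auto simp: less_eq_vec_def mult_left_mono)

lemma nonneg_mat_pow_mult_vec_ge:
  fixes P :: "real mat"
  assumes P: "P \<in> carrier_mat n n" "nonneg_mat P" and y: "y \<in> carrier_vec n"
    and lam: "0 \<le> lam" "lam \<cdot>\<^sub>v y \<le> P *\<^sub>v y"
  shows "lam ^ k \<cdot>\<^sub>v y \<le> P ^\<^sub>m k *\<^sub>v y"
proof (induction k)
  case 0
  show ?case using P y by simp
next
  case (Suc k)
  have Pk: "P ^\<^sub>m k \<in> carrier_mat n n" "nonneg_mat (P ^\<^sub>m k)" using P nonneg_mat_pow by auto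
  have "lam ^ Suc k \<cdot>\<^sub>v y = lam \<cdot>\<^sub>v (lam ^ k \<cdot>\<^sub>v y)" by (simp add: smult_smult_assoc)
  also have "\<dots> \<le> lam \<cdot>\<^sub>v (P ^\<^sub>m k *\<^sub>v y)"
    using smult_vec_left_mono[OF lam(1) Suc.IH] .
  also have "\<dots> = P ^\<^sub>m k *\<^sub>v (lam \<cdot>\<^sub>v y)" using mult_mat_vec[OF Pk(1) y] by simp
  also have "\<dots> \<le> P ^\<^sub>m k *\<^sub>v (P *\<^sub>v y)"
    using nonneg_mat_mult_vec_mono[OF Pk lam(2)] P y by simp
  also have "\<dots> = P ^\<^sub>m Suc k *\<^sub>v y" using assoc_mult_mat_vec[OF Pk(1) P(1) y] by simp
  finally show ?case .
qed

lemma smult_mat_mult_vec: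
  assumes "M \<in> carrier_mat n m" "v \<in> carrier_vec m"
  shows "(c \<cdot>\<^sub>m M) *\<^sub>v v = c \<cdot>\<^sub>v (M *\<^sub>v v)"
  using assms by (intro eq_vecI) (auto simp: scalar_prod_def sum_distrib_left mult.assoc)

lemma spectral_radius_smult_le:
  fixes M :: "complex mat"
  assumes M: "M \<in> carrier_mat n n" and n: "0 < n" and c: "0 < c"
  shows "spectral_radius (of_real c \<cdot>\<^sub>m M) \<le> c * spectral_radius M"
proof -
  have cM: "of_real c \<cdot>\<^sub>m M \<in> carrier_mat n n" using M by simp
  obtain e where e: "e \<in> spectrum (of_real c \<cdot>\<^sub>m M)"
    "spectral_radius (of_real c \<cdot>\<^sub>m M) = norm e"
    using spectral_radius_mem_max(1)[OF cM n] by auto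
  then obtain v where "eigenvector (of_real c \<cdot>\<^sub>m M) v e"
    unfolding spectrum_def eigenvalue_def by auto
  then have v: "v \<in> carrier_vec n" "v \<noteq> 0\<^sub>v n" "of_real c \<cdot>\<^sub>v (M *\<^sub>v v) = e \<cdot>\<^sub>v v"
    using cM smult_mat_mult_vec[OF M] unfolding eigenvector_def by auto
  have "M *\<^sub>v v = (e / of_real c) \<cdot>\<^sub>v v"
  proof -
    have "M *\<^sub>v v = (1 / of_real c) \<cdot>\<^sub>v (of_real c \<cdot>\<^sub>v (M *\<^sub>v v))"
      using c by (simp add: smult_smult_assoc)
    also have "\<dots> = (e / of_real c) \<cdot>\<^sub>v v" unfolding v(3) by (simp add: smult_smult_assoc)
    finally show ?thesis .
  qed
  then have "e / of_real c \<in> spectrum M"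
    using M v unfolding spectrum_def eigenvalue_def eigenvector_def by auto
  then have "norm (e / of_real c) \<le> spectral_radius M"
    using spectral_radius_mem_max(2)[OF M n] by blast
  then have "norm e / c \<le> spectral_radius M"
    using c by (simp add: norm_divide)
  then show ?thesis using e(2) c by (simp add: field_simps)
qed

lemma rho_nonneg:
  assumes "P \<in> carrier_mat n n" "0 < n"
  shows "0 \<le> rho P"
  using spectral_radius_mem_max(1)[of "map_mat complex_of_real P" n] assms
  unfolding rho_def by auto

lemma rho_smult_le:
  assumes P: "P \<in> carrier_mat n n" and n: "0 < n" and c: "0 < c"
  shows "rho (c \<cdot>\<^sub>m P) \<le> c * rho P"
proof -
  have "map_mat complex_of_real (c \<cdot>\<^sub>m P) = of_real c \<cdot>\<^sub>m map_mat complex_of_real P"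
    by (intro eq_matI) auto
  then show ?thesis
    unfolding rho_def using spectral_radius_smult_le[OF _ n c, of "map_mat complex_of_real P"] P
    by simp
qed

lemma rho_less_1_bounded_powers:
  assumes P: "P \<in> carrier_mat n n" and rho: "rho P < 1"
  obtains c where "\<And>k i j. i < n \<Longrightarrow> j < n \<Longrightarrow> (P ^\<^sub>m k) $$ (i,j) \<le> c"
proof -
  have Pc: "map_mat complex_of_real P \<in> carrier_mat n n" using P by simp
  obtain c where c: "\<forall>k. norm_bound (map_mat complex_of_real P ^\<^sub>m k) c"
    using spectral_radius_jnf_norm_bound_less_1_upper_triangular[OF Pc] rho
    unfolding rho_def by auto
  have "(P ^\<^sub>m k) $$ (i,j) \<le> c" if "i < n" "j < n" for k i j
  proof -
    have "norm ((map_mat complex_of_real P ^\<^sub>m k) $$ (i,j)) \<le> c"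
      using c that P unfolding norm_bound_def by auto
    then show ?thesis using that P by (simp add: of_real_hom.mat_hom_pow[OF P, symmetric])
  qed
  then show ?thesis using that by blast
qed

lemma rho_ge_if_subinvariant:
  fixes P :: "real mat"
  assumes P: "P \<in> carrier_mat n n" "nonneg_mat P"
    and y: "y \<in> carrier_vec n" "0\<^sub>v n \<le> y" "y \<noteq> 0\<^sub>v n"
    and lam: "0 \<le> lam" "lam \<cdot>\<^sub>v y \<le> P *\<^sub>v y"
  shows "lam \<le> rho P"
proof (rule ccontr)
  assume "\<not> lam \<le> rho P"
  (* then P / nu has bounded powers for rho P < nu < lam, while (lam / nu)^k y <= (P / nu)^k y *)
  obtain i0 where i0: "i0 < n" "0 < y $ i0"
    using y by (metis eq_vecI carrier_vecD index_zero_vec less_eq_vec_def order_less_le)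
  then have n: "0 < n" by simp
  define \<nu> where "\<nu> = (rho P + lam) / 2"
  have \<nu>: "0 < \<nu>" "rho P < \<nu>" "1 < lam / \<nu>"
    using \<open>\<not> lam \<le> rho P\<close> rho_nonneg[OF P(1) n] unfolding \<nu>_def by auto
  define Q where "Q = (1 / \<nu>) \<cdot>\<^sub>m P"
  have Q: "Q \<in> carrier_mat n n" "nonneg_mat Q"
    using P \<nu> unfolding Q_def nonneg_mat_def by auto
  have "rho Q \<le> rho P / \<nu>" using rho_smult_le[OF P(1) n, of "1 / \<nu>"] \<nu> unfolding Q_def by simp
  also have "\<dots> < 1" using \<nu> by simp
  finally obtain c where c: "\<And>k i j. i < n \<Longrightarrow> j < n \<Longrightarrow> (Q ^\<^sub>m k) $$ (i,j) \<le> c"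
    using rho_less_1_bounded_powers[OF Q(1)] by blast
  have "lam / \<nu> \<cdot>\<^sub>v y = (1 / \<nu>) \<cdot>\<^sub>v (lam \<cdot>\<^sub>v y)" by (simp add: smult_smult_assoc)
  also have "\<dots> \<le> Q *\<^sub>v y"
    using smult_vec_left_mono[OF _ lam(2), of "1 / \<nu>"] \<nu> smult_mat_mult_vec[OF P(1) y(1)]
    unfolding Q_def by simp
  finally have Qy: "lam / \<nu> \<cdot>\<^sub>v y \<le> Q *\<^sub>v y" .
  have "(lam / \<nu>) ^ k * y $ i0 \<le> c * (\<Sum>j<n. y $ j)" for k
  proof -
    have "(lam / \<nu>) ^ k * y $ i0 \<le> (Q ^\<^sub>m k *\<^sub>v y) $ i0"
      using nonneg_mat_pow_mult_vec_ge[OF Q y(1) _ Qy, of k] \<nu> i0 Q(1)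
      by (auto simp: less_eq_vec_def)
    also have "\<dots> = (\<Sum>j<n. (Q ^\<^sub>m k) $$ (i0,j) * y $ j)"
      using Q(1) y(1) i0 by (intro index_mult_mat_vec_sum) auto
    also have "\<dots> \<le> (\<Sum>j<n. c * y $ j)"
      using c i0 y by (intro sum_mono mult_right_mono) (auto simp: less_eq_vec_def)
    finally show ?thesis by (simp add: sum_distrib_left)
  qed
  moreover obtain k where "c * (\<Sum>j<n. y $ j) / y $ i0 < (lam / \<nu>) ^ k"
    using real_arch_pow[OF \<nu>(3)] by blast
  ultimately show False using i0 by (simp add: field_simps) (meson not_less)
qed

section \<open>Pattern splittings of a nonsingular M-matrix\<close>

lemma Z_row_eigen_modulus_le:
  fixes m a :: "nat \<Rightarrow> real" and v :: "nat \<Rightarrow> complex"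
  assumes i: "i < n" and m_diag: "0 \<le> m i"
    and m_off: "\<And>j. j < n \<Longrightarrow> j \<noteq> i \<Longrightarrow> m j \<le> 0"
    and a: "\<And>j. j < n \<Longrightarrow> 0 \<le> a j"
    and eq: "(\<Sum>j<n. of_real (a j) * v j) = e * (\<Sum>j<n. of_real (m j) * v j)"
  shows "cmod e * (\<Sum>j<n. m j * cmod (v j)) \<le> (\<Sum>j<n. a j * cmod (v j))"
proof -
  define R where "R = {..<n} - {i}"
  have split: "(\<Sum>j<n. f j) = f i + (\<Sum>j\<in>R. f j)" for f :: "nat \<Rightarrow> 'b :: comm_monoid_add"
    unfolding R_def using i by (simp add: sum.remove)
  define S where "S = (\<Sum>j\<in>R. of_real (m j) * v j)"
  have "cmod S \<le> (\<Sum>j\<in>R. - m j * cmod (v j))"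
    unfolding S_def using m_off
    by (intro order.trans[OF norm_sum] sum_mono) (auto simp: R_def norm_mult)
  moreover have "cmod (\<Sum>j<n. of_real (a j) * v j) \<le> (\<Sum>j<n. a j * cmod (v j))"
    using a by (intro order.trans[OF norm_sum] sum_mono) (auto simp: norm_mult)
  moreover have "e * (of_real (m i) * v i) = (\<Sum>j<n. of_real (a j) * v j) - e * S"
    using eq split[of "\<lambda>j. of_real (m j) * v j"] unfolding S_def by (simp add: algebra_simps)
  then have "cmod (e * (of_real (m i) * v i)) \<le> cmod (\<Sum>j<n. of_real (a j) * v j) + cmod (e * S)"
    by (metis norm_triangle_ineq4)
  moreover have "cmod e * cmod S \<le> cmod e * (\<Sum>j\<in>R. - m j * cmod (v j))"
    using \<open>cmod S \<le> _\<close> by (simp add: mult_left_mono)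
  ultimately have "cmod e * m i * cmod (v i)
      \<le> (\<Sum>j<n. a j * cmod (v j)) + cmod e * (\<Sum>j\<in>R. - m j * cmod (v j))"
    using m_diag by (simp add: norm_mult mult.assoc)
  then show ?thesis
    using split[of "\<lambda>j. m j * cmod (v j)"] by (simp add: sum_negf algebra_simps)
qed

lemma Z_matrix_eigen_modulus_le:
  fixes M N :: "real mat" and v :: "complex vec"
  assumes M: "M \<in> carrier_mat n n" "\<And>i. i < n \<Longrightarrow> 0 \<le> M $$ (i,i)"
      "\<And>i j. i < n \<Longrightarrow> j < n \<Longrightarrow> i \<noteq> j \<Longrightarrow> M $$ (i,j) \<le> 0"
    and N: "N \<in> carrier_mat n n" "nonneg_mat N" and v: "v \<in> carrier_vec n"
    and eq: "map_mat of_real N *\<^sub>v v = e \<cdot>\<^sub>v (map_mat of_real M *\<^sub>v v)"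
  shows "cmod e \<cdot>\<^sub>v (M *\<^sub>v map_vec cmod v) \<le> N *\<^sub>v map_vec cmod v"
proof -
  have "cmod e * (M *\<^sub>v map_vec cmod v) $ i \<le> (N *\<^sub>v map_vec cmod v) $ i" if i: "i < n" for i
  proof -
    have "(\<Sum>j<n. of_real (N $$ (i,j)) * v $ j) = e * (\<Sum>j<n. of_real (M $$ (i,j)) * v $ j)"
      using arg_cong[OF eq, of "\<lambda>w. w $ i"] M(1) N(1) v i
        index_mult_mat_vec_sum[of "map_mat of_real M" n n v i]
        index_mult_mat_vec_sum[of "map_mat of_real N" n n v i]
      by simp
    then have "cmod e * (\<Sum>j<n. M $$ (i,j) * cmod (v $ j)) \<le> (\<Sum>j<n. N $$ (i,j) * cmod (v $ j))"
      using M N i unfolding nonneg_mat_def by (intro Z_row_eigen_modulus_le[OF i]) auto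
    then show ?thesis
      using index_mult_mat_vec_sum[OF M(1), of "map_vec cmod v" i]
        index_mult_mat_vec_sum[OF N(1), of "map_vec cmod v" i] v i
      by simp
  qed
  then show ?thesis using M(1) N(1) v by (simp add: less_eq_vec_def)
qed

definition mask_mat :: "(nat \<Rightarrow> nat \<Rightarrow> bool) \<Rightarrow> 'a :: zero mat \<Rightarrow> 'a mat" where
  "mask_mat K A = mat (dim_row A) (dim_col A) (\<lambda>(i,j). if K i j then A $$ (i,j) else 0)"

lemma tril_eq_mask_mat: "tril A = mask_mat (\<lambda>i j. j \<le> i) A"
  unfolding tril_def mask_mat_def by simp

lemma triu_eq_mask_mat: "triu A = mask_mat (\<lambda>i j. i \<le> j) A"
  unfolding triu_def mask_mat_def by simp

lemma stair1_eq_mask_mat: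
  "stair1 A = mask_mat (\<lambda>i j. i = j \<or> even (Suc i) \<and> (j = i + 1 \<or> i = j + 1)) A"
  unfolding stair1_def mask_mat_def by (auto intro!: eq_matI simp: tridiag_def)

lemma stair2_eq_mask_mat:
  "stair2 A = mask_mat (\<lambda>i j. i = j \<or> odd (Suc i) \<and> (j = i + 1 \<or> i = j + 1)) A"
  unfolding stair2_def mask_mat_def by (auto intro!: eq_matI simp: tridiag_def)

locale M_matrix =
  fixes A B :: "real mat" and s :: real and n :: nat
  assumes A_carrier: "A \<in> carrier_mat n n" and B_carrier: "B \<in> carrier_mat n n"
    and B_nonneg: "nonneg_mat B" and A_eq: "A = s \<cdot>\<^sub>m 1\<^sub>m n - B" and rho_B_less: "rho B < s"
begin

lemma A_entry: "i < n \<Longrightarrow> j < n \<Longrightarrow> A $$ (i,j) = (if i = j then s else 0) - B $$ (i,j)"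
  using B_carrier unfolding A_eq by auto

lemma A_offdiag_nonpos: "i < n \<Longrightarrow> j < n \<Longrightarrow> i \<noteq> j \<Longrightarrow> A $$ (i,j) \<le> 0"
  using A_entry B_nonneg B_carrier unfolding nonneg_mat_def by auto

lemma A_mult_vec: "y \<in> carrier_vec n \<Longrightarrow> A *\<^sub>v y = s \<cdot>\<^sub>v y - B *\<^sub>v y"
  unfolding A_eq using B_carrier
  by (simp add: minus_mult_distrib_mat_vec[of _ n n] smult_mat_mult_vec[of _ n n])

lemma B_diag_less: assumes i: "i < n" shows "B $$ (i,i) < s"
proof -
  have "B $$ (i,i) \<cdot>\<^sub>v unit_vec n i \<le> B *\<^sub>v unit_vec n i"
    using B_carrier B_nonneg i by (auto simp: less_eq_vec_def nonneg_mat_def)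
  moreover have "0\<^sub>v n \<le> (unit_vec n i :: real vec)" by (simp add: less_eq_vec_def unit_vec_def)
  ultimately have "B $$ (i,i) \<le> rho B"
    using B_carrier B_nonneg i
    by (intro rho_ge_if_subinvariant[of B n "unit_vec n i"]) (auto simp: nonneg_mat_def)
  then show ?thesis using rho_B_less by simp
qed

lemma A_diag_pos: "i < n \<Longrightarrow> 0 < A $$ (i,i)"
  using A_entry B_diag_less by simp

lemma mask_mat_carrier: "mask_mat K A \<in> carrier_mat n n"
  using A_carrier unfolding mask_mat_def by simp

lemma mask_mat_entry:
  "i < n \<Longrightarrow> j < n \<Longrightarrow> mask_mat K A $$ (i,j) = (if K i j then A $$ (i,j) else 0)"
  using A_carrier unfolding mask_mat_def by simp

lemma mask_mat_mult_vec_entry: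
  assumes K: "\<And>i. K i i" and x: "x \<in> carrier_vec n" and k: "k < n"
  shows "(mask_mat K A *\<^sub>v x) $ k = s * x $ k - (\<Sum>j<n. (if K k j then B $$ (k,j) else 0) * x $ j)"
proof -
  have "(mask_mat K A *\<^sub>v x) $ k
      = (\<Sum>j<n. (if k = j then s * x $ j else 0) - (if K k j then B $$ (k,j) else 0) * x $ j)"
    using K k by (auto simp: index_mult_mat_vec_sum[OF mask_mat_carrier x k] mask_mat_entry A_entry
        algebra_simps intro!: sum.cong)
  then show ?thesis using k by (simp add: sum_subtractf)
qed

lemma mask_mat_monotone:
  assumes K: "\<And>i. K i i" and x: "x \<in> carrier_vec n" and Mx: "0\<^sub>v n \<le> mask_mat K A *\<^sub>v x"
  shows "0\<^sub>v n \<le> x"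
proof (rule ccontr)
  assume "\<not> 0\<^sub>v n \<le> x"
  then obtain i where i: "i < n" "x $ i < 0" using x by (auto simp: less_eq_vec_def)
  define u where "u = vec n (\<lambda>k. max (- x $ k) 0)"
  have u: "u \<in> carrier_vec n" "0\<^sub>v n \<le> u" "u \<noteq> 0\<^sub>v n"
    using i unfolding u_def by (auto simp: less_eq_vec_def dest!: arg_cong[of _ _ "\<lambda>v. v $ i"])
  have "s \<cdot>\<^sub>v u \<le> B *\<^sub>v u"
  proof -
    have "s * u $ k \<le> (B *\<^sub>v u) $ k" if k: "k < n" for k
    proof (cases "0 \<le> x $ k")
      case True
      then show ?thesis
        using nonneg_mat_mult_vec_mono[OF B_carrier B_nonneg u(2)] k u B_carrier
        by (force simp: u_def less_eq_vec_def)
    next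
      case False
      have "0 \<le> (mask_mat K A *\<^sub>v x) $ k"
        using less_eq_vecD[OF Mx] k mask_mat_carrier[of K] by simp
      have "s * u $ k = - s * x $ k" using False k by (simp add: u_def)
      also have "\<dots> \<le> (\<Sum>j<n. (if K k j then B $$ (k,j) else 0) * - x $ j)"
        using \<open>0 \<le> (mask_mat K A *\<^sub>v x) $ k\<close> mask_mat_mult_vec_entry[of K, OF K x k]
        by (simp add: sum_negf)
      also have "\<dots> \<le> (\<Sum>j<n. B $$ (k,j) * u $ j)"
      proof (rule sum_mono)
        fix j assume "j \<in> {..<n}"
        then have "0 \<le> B $$ (k,j)" "- x $ j \<le> u $ j" "0 \<le> u $ j"
          using B_nonneg B_carrier k by (auto simp: u_def nonneg_mat_def)
        then show "(if K k j then B $$ (k,j) else 0) * - x $ j \<le> B $$ (k,j) * u $ j"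
          using mult_left_mono[of "- x $ j" "u $ j" "B $$ (k,j)"] by simp
      qed
      also have "\<dots> = (B *\<^sub>v u) $ k" using index_mult_mat_vec_sum[OF B_carrier u(1) k] by simp
      finally show ?thesis .
    qed
    then show ?thesis using B_carrier u(1) by (simp add: less_eq_vec_def)
  qed
  then have "s \<le> rho B"
    using B_diag_less[OF i(1)] B_nonneg B_carrier i(1)
    by (intro rho_ge_if_subinvariant[OF B_carrier B_nonneg u]) (force simp: nonneg_mat_def)
  then show False using rho_B_less by simp
qed

lemma mask_mat_minus_carrier: "mask_mat K A - A \<in> carrier_mat n n"
  using minus_carrier_mat[OF A_carrier] .

lemma mask_mat_inverse:
  assumes K: "\<And>i. K i i"
  obtains Minv where "mat_inverse (mask_mat K A) = Some Minv" "mask_mat K A * Minv = 1\<^sub>m n"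
    "Minv * mask_mat K A = 1\<^sub>m n" "Minv \<in> carrier_mat n n" "nonneg_mat Minv"
proof -
  let ?M = "mask_mat K A"
  have M: "?M \<in> carrier_mat n n" by (rule mask_mat_carrier)
  have "det ?M \<noteq> 0"
  proof
    assume "det ?M = 0"
    then obtain v where v: "v \<in> carrier_vec n" "v \<noteq> 0\<^sub>v n" "?M *\<^sub>v v = 0\<^sub>v n"
      using det_0_iff_vec_prod_zero_field[OF M] by auto
    have "?M *\<^sub>v ((-1) \<cdot>\<^sub>v v) = (-1) \<cdot>\<^sub>v 0\<^sub>v n" using mult_mat_vec[OF M v(1)] v(3) by simp
    also have "\<dots> = 0\<^sub>v n" by (intro eq_vecI) simp_all
    finally have nonneg: "0\<^sub>v n \<le> v" "0\<^sub>v n \<le> (-1) \<cdot>\<^sub>v v"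
      using mask_mat_monotone[of K, OF K] v by simp_all
    have "v $ i = 0" if "i < n" for i
      using less_eq_vecD[OF nonneg(1), of i] less_eq_vecD[OF nonneg(2), of i] that v(1) by simp
    then have "v = 0\<^sub>v n" using v(1) by (intro eq_vecI) auto
    with v(2) show False ..
  qed
  then have "?M \<in> Units (ring_mat TYPE(real) n ())" by (rule det_non_zero_imp_unit[OF M])
  then have "mat_inverse ?M \<noteq> None" using mat_inverse(1)[OF M, of "()"] by auto
  then obtain Minv where Minv: "mat_inverse ?M = Some Minv" by blast
  have inverse: "?M * Minv = 1\<^sub>m n" "Minv * ?M = 1\<^sub>m n" "Minv \<in> carrier_mat n n"
    using mat_inverse(2)[OF M Minv] by auto
  have "0 \<le> Minv $$ (i,j)" if ij: "i < n" "j < n" for i j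
  proof -
    have "?M *\<^sub>v (Minv *\<^sub>v unit_vec n j) = (?M * Minv) *\<^sub>v unit_vec n j"
      by (rule assoc_mult_mat_vec[OF M inverse(3) unit_vec_carrier, symmetric])
    also have "\<dots> = unit_vec n j" using inverse by simp
    finally have "0\<^sub>v n \<le> ?M *\<^sub>v (Minv *\<^sub>v unit_vec n j)"
      by (simp add: less_eq_vec_def unit_vec_def)
    then have "0\<^sub>v n \<le> Minv *\<^sub>v unit_vec n j"
      using mask_mat_monotone[of K, OF K] inverse(3) by simp
    from less_eq_vecD[OF this, of i] show ?thesis using inverse(3) ij by simp
  qed
  then show ?thesis using that Minv inverse by (auto simp: nonneg_mat_def)
qed

lemma mask_mat_minus_nonneg:
  assumes K: "\<And>i. K i i"
  shows "nonneg_mat (mask_mat K A - A)"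
proof -
  have "0 \<le> (mask_mat K A - A) $$ (i,j)" if "i < n" "j < n" for i j
    using that A_carrier K[of i] A_offdiag_nonpos[OF that] mask_mat_carrier[of K]
    by (cases "i = j") (simp_all add: mask_mat_entry)
  then show ?thesis using A_carrier by (simp add: nonneg_mat_def)
qed

lemma iter_mat_mask_mat_nonneg:
  assumes K: "\<And>i. K i i"
  shows "iter_mat (mask_mat K A) A \<in> carrier_mat n n" "nonneg_mat (iter_mat (mask_mat K A) A)"
proof -
  obtain Minv where "mat_inverse (mask_mat K A) = Some Minv" "Minv \<in> carrier_mat n n" "nonneg_mat Minv"
    using mask_mat_inverse[of K, OF K] by metis
  then show "iter_mat (mask_mat K A) A \<in> carrier_mat n n" "nonneg_mat (iter_mat (mask_mat K A) A)"
    unfolding iter_mat_def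
    using nonneg_mat_mult[OF _ mask_mat_minus_carrier _ mask_mat_minus_nonneg[of K, OF K]]
      mask_mat_minus_carrier[of K]
    by auto
qed

lemma rho_iter_mat_mask_mat_ge_if_subinvariant:
  assumes K: "\<And>i. K i i" and y: "y \<in> carrier_vec n" "0\<^sub>v n \<le> y" "y \<noteq> 0\<^sub>v n"
    and lam: "0 \<le> lam" "lam \<cdot>\<^sub>v (mask_mat K A *\<^sub>v y) \<le> (mask_mat K A - A) *\<^sub>v y"
  shows "lam \<le> rho (iter_mat (mask_mat K A) A)"
proof (rule rho_ge_if_subinvariant[OF iter_mat_mask_mat_nonneg[of K, OF K] y lam(1)])
  obtain Minv where Minv: "mat_inverse (mask_mat K A) = Some Minv" "Minv * mask_mat K A = 1\<^sub>m n"
    "Minv \<in> carrier_mat n n" "nonneg_mat Minv"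
    using mask_mat_inverse[of K, OF K] by metis
  note M = mask_mat_carrier[of K] and N = mask_mat_minus_carrier[of K]
  have "lam \<cdot>\<^sub>v y = Minv *\<^sub>v (lam \<cdot>\<^sub>v (mask_mat K A *\<^sub>v y))"
    using Minv y M by (simp add: mult_mat_vec assoc_mult_mat_vec[symmetric, of _ n n _ n])
  also have "\<dots> \<le> Minv *\<^sub>v ((mask_mat K A - A) *\<^sub>v y)"
    using nonneg_mat_mult_vec_mono[OF Minv(3,4) lam(2)] N y(1) by simp
  also have "\<dots> = iter_mat (mask_mat K A) A *\<^sub>v y"
    unfolding iter_mat_def using Minv N y(1) by (simp add: assoc_mult_mat_vec)
  finally show "lam \<cdot>\<^sub>v y \<le> iter_mat (mask_mat K A) A *\<^sub>v y" .
qed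

lemma iter_mat_mask_mat_eigenvalueE:
  assumes K: "\<And>i. K i i"
    and e: "e \<in> spectrum (map_mat complex_of_real (iter_mat (mask_mat K A) A))"
  obtains y where "y \<in> carrier_vec n" "0\<^sub>v n \<le> y" "y \<noteq> 0\<^sub>v n"
    "cmod e \<cdot>\<^sub>v (mask_mat K A *\<^sub>v y) \<le> (mask_mat K A - A) *\<^sub>v y"
proof -
  let ?M = "mask_mat K A" and ?N = "mask_mat K A - A" and ?P = "iter_mat (mask_mat K A) A"
  obtain Minv where Minv: "mat_inverse ?M = Some Minv" "?M * Minv = 1\<^sub>m n" "Minv \<in> carrier_mat n n"
    using mask_mat_inverse[of K, OF K] by metis
  note M = mask_mat_carrier[of K] and N = mask_mat_minus_carrier[of K]
    and P = iter_mat_mask_mat_nonneg(1)[of K, OF K]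
  obtain v where v: "v \<in> carrier_vec n" "v \<noteq> 0\<^sub>v n"
    "map_mat complex_of_real ?P *\<^sub>v v = e \<cdot>\<^sub>v v"
    using e P unfolding spectrum_def eigenvalue_def eigenvector_def by auto
  have "?M * ?P = ?N"
    unfolding iter_mat_def using Minv M N
    by (simp add: assoc_mult_mat[symmetric, of _ n n _ n _ n] left_mult_one_mat[OF N])
  then have "map_mat complex_of_real ?N = map_mat complex_of_real ?M * map_mat complex_of_real ?P"
    using of_real_hom.mat_hom_mult[OF M P] by simp
  then have "map_mat complex_of_real ?N *\<^sub>v v
      = map_mat complex_of_real ?M *\<^sub>v (map_mat complex_of_real ?P *\<^sub>v v)"
    using assoc_mult_mat_vec[of "map_mat complex_of_real ?M" n n "map_mat complex_of_real ?P" n v] M P v(1)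
    by simp
  also have "\<dots> = map_mat complex_of_real ?M *\<^sub>v (e \<cdot>\<^sub>v v)" using v(3) by simp
  also have "\<dots> = e \<cdot>\<^sub>v (map_mat complex_of_real ?M *\<^sub>v v)"
    using M v(1) by (simp add: mult_mat_vec)
  finally have "cmod e \<cdot>\<^sub>v (?M *\<^sub>v map_vec cmod v) \<le> ?N *\<^sub>v map_vec cmod v"
    using M N v(1) A_diag_pos K A_offdiag_nonpos mask_mat_minus_nonneg[of K, OF K]
    by (intro Z_matrix_eigen_modulus_le) (auto simp: mask_mat_entry less_imp_le)
  moreover have "map_vec cmod v \<noteq> 0\<^sub>v n"
    using v(1,2) by (auto simp: vec_eq_iff)
  moreover have "0\<^sub>v n \<le> map_vec cmod v"
    using v(1) by (simp add: less_eq_vec_def)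
  ultimately show ?thesis
    using that[of "map_vec cmod v"] v(1) by simp
qed

lemma rho_iter_mat_mask_mat_less_1:
  assumes K: "\<And>i. K i i" and n: "0 < n"
  shows "rho (iter_mat (mask_mat K A) A) < 1"
proof (rule ccontr)
  let ?M = "mask_mat K A" and ?N = "mask_mat K A - A" and ?P = "iter_mat (mask_mat K A) A"
  assume "\<not> rho ?P < 1"
  have P: "map_mat complex_of_real ?P \<in> carrier_mat n n"
    using iter_mat_mask_mat_nonneg(1)[of K, OF K] by simp
  obtain e where e: "e \<in> spectrum (map_mat complex_of_real ?P)" "rho ?P = cmod e"
    using spectral_radius_mem_max(1)[OF P n] unfolding rho_def by auto
  then obtain y where y: "y \<in> carrier_vec n" "0\<^sub>v n \<le> y" "y \<noteq> 0\<^sub>v n"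
    and eig: "cmod e \<cdot>\<^sub>v (?M *\<^sub>v y) \<le> ?N *\<^sub>v y"
    using iter_mat_mask_mat_eigenvalueE[of K, OF K] by metis
  have "s * y $ i \<le> (B *\<^sub>v y) $ i" if i: "i < n" for i
  proof -
    have Ny: "(?N *\<^sub>v y) $ i = (?M *\<^sub>v y) $ i - (A *\<^sub>v y) $ i"
      using minus_mult_distrib_mat_vec[OF mask_mat_carrier A_carrier y(1)] A_carrier i by simp
    have "0 \<le> (?N *\<^sub>v y) $ i"
      using less_eq_vecD[OF nonneg_mat_mult_vec_nonneg[OF mask_mat_minus_carrier
          mask_mat_minus_nonneg[of K, OF K] y(1,2)], of i] A_carrier i
      by simp
    moreover have "cmod e * (?M *\<^sub>v y) $ i \<le> (?N *\<^sub>v y) $ i"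
      using less_eq_vecD[OF eig, of i] A_carrier mask_mat_carrier[of K] i by simp
    moreover have "(?M *\<^sub>v y) $ i \<le> cmod e * (?M *\<^sub>v y) $ i" if "0 \<le> (?M *\<^sub>v y) $ i"
      using mult_right_mono[OF _ that, of 1 "cmod e"] \<open>\<not> rho ?P < 1\<close> e(2) by simp
    ultimately have "(A *\<^sub>v y) $ i \<le> 0"
      using Ny by (cases "0 \<le> (?M *\<^sub>v y) $ i") auto
    then show ?thesis using A_mult_vec[OF y(1)] B_carrier y(1) i by simp
  qed
  then have "s \<cdot>\<^sub>v y \<le> B *\<^sub>v y"
    using y(1) B_carrier by (intro less_eq_vecI[of _ n]) auto
  moreover have "0 \<le> s"
    using B_diag_less[OF n] B_nonneg B_carrier n by (force simp: nonneg_mat_def)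
  ultimately have "s \<le> rho B"
    by (rule rho_ge_if_subinvariant[OF B_carrier B_nonneg y, rotated])
  then show False using rho_B_less by simp
qed

lemma mask_mat_residual_row:
  assumes z: "z \<in> carrier_vec n" and i: "i < n"
  shows "lam * (mask_mat K A *\<^sub>v z) $ i - ((mask_mat K A - A) *\<^sub>v z) $ i
    = (\<Sum>j<n. lam ^ of_bool (K i j) * A $$ (i,j) * z $ j)"
proof -
  have "lam * (mask_mat K A *\<^sub>v z) $ i - ((mask_mat K A - A) *\<^sub>v z) $ i
      = (\<Sum>j<n. (lam * mask_mat K A $$ (i,j) - (mask_mat K A - A) $$ (i,j)) * z $ j)"
    by (simp add: index_mult_mat_vec_sum[OF mask_mat_carrier z i]
        index_mult_mat_vec_sum[OF mask_mat_minus_carrier z i]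
        sum_distrib_left sum_subtractf algebra_simps)
  also have "\<dots> = (\<Sum>j<n. lam ^ of_bool (K i j) * A $$ (i,j) * z $ j)"
    using A_carrier i by (intro sum.cong) (auto simp: mask_mat_entry)
  finally show ?thesis .
qed

lemma mask_mat_rescaled_subinvariant:
  fixes p :: "nat \<Rightarrow> nat"
  assumes KX: "\<And>i. KX i i" and KY: "\<And>i. KY i i"
    and potential: "\<And>i j. i < n \<Longrightarrow> j < n \<Longrightarrow> i \<noteq> j \<Longrightarrow> A $$ (i,j) \<noteq> 0 \<Longrightarrow>
      of_bool (KX i j) + p j \<le> of_bool (KY i j) + p i"
    and lam: "0 < lam" "lam \<le> 1" and y: "y \<in> carrier_vec n" "0\<^sub>v n \<le> y"
    and sub: "lam \<cdot>\<^sub>v (mask_mat KY A *\<^sub>v y) \<le> (mask_mat KY A - A) *\<^sub>v y"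
    and z: "z = vec n (\<lambda>j. lam ^ p j * y $ j)"
  shows "lam \<cdot>\<^sub>v (mask_mat KX A *\<^sub>v z) \<le> (mask_mat KX A - A) *\<^sub>v z"
proof (rule less_eq_vecI[of _ n])
  fix i assume i: "i < n"
  (* termwise, since the off-diagonal entries of A are nonpositive and lam <= 1 *)
  have term_le: "lam ^ of_bool (KX i j) * A $$ (i,j) * z $ j
      \<le> lam ^ p i * (lam ^ of_bool (KY i j) * A $$ (i,j) * y $ j)" if j: "j < n" for j
  proof -
    consider "i = j" | "A $$ (i,j) = 0" | "i \<noteq> j" "A $$ (i,j) < 0"
      using A_offdiag_nonpos[OF i j] by fastforce
    then show ?thesis
    proof cases
      case 3
      have "lam ^ (of_bool (KY i j) + p i) \<le> lam ^ (of_bool (KX i j) + p j)"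
        using potential[OF i j 3(1)] 3(2) lam by (intro power_decreasing) auto
      moreover have "A $$ (i,j) * y $ j \<le> 0"
        using 3(2) less_eq_vecD[OF y(2), of j] y(1) j by (simp add: mult_nonpos_nonneg)
      ultimately have "lam ^ (of_bool (KX i j) + p j) * (A $$ (i,j) * y $ j)
          \<le> lam ^ (of_bool (KY i j) + p i) * (A $$ (i,j) * y $ j)"
        by (rule mult_right_mono_neg)
      then show ?thesis using j unfolding z by (simp add: power_add algebra_simps)
    qed (use j KX KY in \<open>auto simp: z algebra_simps\<close>)
  qed
  have "lam * (mask_mat KX A *\<^sub>v z) $ i - ((mask_mat KX A - A) *\<^sub>v z) $ i
      = (\<Sum>j<n. lam ^ of_bool (KX i j) * A $$ (i,j) * z $ j)"
    using z by (simp add: mask_mat_residual_row[OF _ i])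
  also have "\<dots> \<le> (\<Sum>j<n. lam ^ p i * (lam ^ of_bool (KY i j) * A $$ (i,j) * y $ j))"
    using term_le by (intro sum_mono) auto
  also have "\<dots> = lam ^ p i * (lam * (mask_mat KY A *\<^sub>v y) $ i - ((mask_mat KY A - A) *\<^sub>v y) $ i)"
    by (simp add: mask_mat_residual_row[OF y(1) i] sum_distrib_left)
  also have "\<dots> \<le> 0"
    using less_eq_vecD[OF sub, of i] A_carrier mask_mat_carrier[of KY] i lam
    by (simp add: mult_nonneg_nonpos)
  finally show "(lam \<cdot>\<^sub>v (mask_mat KX A *\<^sub>v z)) $ i \<le> ((mask_mat KX A - A) *\<^sub>v z) $ i"
    using A_carrier mask_mat_carrier[of KX] i by simp
qed (use A_carrier mask_mat_carrier[of KX] in simp_all)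

lemma rho_iter_mat_mask_mat_mono:
  fixes p :: "nat \<Rightarrow> nat"
  assumes KX: "\<And>i. KX i i" and KY: "\<And>i. KY i i"
    and potential: "\<And>i j. i < n \<Longrightarrow> j < n \<Longrightarrow> i \<noteq> j \<Longrightarrow> A $$ (i,j) \<noteq> 0 \<Longrightarrow>
      of_bool (KX i j) + p j \<le> of_bool (KY i j) + p i"
  shows "rho (iter_mat (mask_mat KY A) A) \<le> rho (iter_mat (mask_mat KX A) A)"
proof (cases "n = 0")
  case True
  (* rho of a 0 x 0 matrix is the unspecified Max {}, but both splittings are the same *)
  then have "mask_mat KY A = mask_mat KX A"
    using mask_mat_carrier[of KX] mask_mat_carrier[of KY] by (intro eq_matI) auto
  then show ?thesis by simp
next
  case False
  then have n: "0 < n" by simp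
  let ?PY = "iter_mat (mask_mat KY A) A"
  have PY: "map_mat complex_of_real ?PY \<in> carrier_mat n n"
    using iter_mat_mask_mat_nonneg(1)[of KY, OF KY] by simp
  obtain e where e: "e \<in> spectrum (map_mat complex_of_real ?PY)" "rho ?PY = cmod e"
    using spectral_radius_mem_max(1)[OF PY n] unfolding rho_def by auto
  obtain y where y: "y \<in> carrier_vec n" "0\<^sub>v n \<le> y" "y \<noteq> 0\<^sub>v n"
    and sub: "cmod e \<cdot>\<^sub>v (mask_mat KY A *\<^sub>v y) \<le> (mask_mat KY A - A) *\<^sub>v y"
    using iter_mat_mask_mat_eigenvalueE[of KY, OF KY e(1)] by metis
  show ?thesis
  proof (cases "e = 0")
    case True
    then show ?thesis using e(2) rho_nonneg[OF iter_mat_mask_mat_nonneg(1)[of KX, OF KX] n] by simp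
  next
    case False
    define z where "z = vec n (\<lambda>j. cmod e ^ p j * y $ j)"
    have lam: "0 < cmod e" "cmod e \<le> 1"
      using False rho_iter_mat_mask_mat_less_1[of KY, OF KY n] e(2) by simp_all
    have "z \<in> carrier_vec n" "0\<^sub>v n \<le> z" "z \<noteq> 0\<^sub>v n"
      using y lam unfolding z_def by (auto simp: less_eq_vec_def vec_eq_iff)
    moreover have "cmod e \<cdot>\<^sub>v (mask_mat KX A *\<^sub>v z) \<le> (mask_mat KX A - A) *\<^sub>v z"
      by (rule mask_mat_rescaled_subinvariant[OF KX KY potential lam y(1,2) sub z_def])
    ultimately show ?thesis
      using rho_iter_mat_mask_mat_ge_if_subinvariant[of KX, OF KX] e(2) by simp
  qed
qed

lemma rho_iter_mat_mask_mat_mono_hessenberg: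
  fixes p :: "nat \<Rightarrow> nat"
  assumes "lower_hessenberg A" and "\<And>i. KX i i" and "\<And>i. KY i i"
    and potential: "\<And>i j. i \<noteq> j \<Longrightarrow> j \<le> i + 1 \<Longrightarrow>
      of_bool (KX i j) + p j \<le> of_bool (KY i j) + p i"
  shows "rho (iter_mat (mask_mat KY A) A) \<le> rho (iter_mat (mask_mat KX A) A)"
proof (rule rho_iter_mat_mask_mat_mono[OF assms(2,3) potential])
  show "j \<le> i + 1" if "i < n" "j < n" "A $$ (i,j) \<noteq> 0" for i j
    using assms(1) A_carrier that unfolding lower_hessenberg_def by force
qed

end

lemma nonsingular_M_matrixE:
  assumes A: "A \<in> carrier_mat n n" and "nonsingular_M_matrix A"
  obtains B s where "M_matrix A B s n"
proof -
  obtain m s B where m: "A \<in> carrier_mat m m" "B \<in> carrier_mat m m"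
    "\<forall>i<m. \<forall>j<m. 0 \<le> B $$ (i,j)" "A = s \<cdot>\<^sub>m 1\<^sub>m m - B" "rho B < s"
    using assms(2) unfolding nonsingular_M_matrix_def by blast
  moreover have "m = n" using m(1) A by auto
  ultimately have "M_matrix A B s n" unfolding M_matrix_def nonneg_mat_def by auto
  then show ?thesis by (rule that)
qed

theorem theorem4:
  fixes A :: "real mat" and n :: nat
  assumes "A \<in> carrier_mat n n"
    and "lower_hessenberg A"
    and "nonsingular_M_matrix A"
    and "S = stair1 A \<or> S = stair2 A"
  shows "rho (iter_mat (tril A) A) \<ge> rho (iter_mat S A)
       \<and> rho (iter_mat S A) \<ge> rho (iter_mat (triu A) A)"
proof -
  obtain B s where "M_matrix A B s n" using nonsingular_M_matrixE[OF assms(1,3)] .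
  then interpret M_matrix A B s n .
  consider "S = stair1 A" | "S = stair2 A" using assms(4) by blast
  then show ?thesis
  proof cases
    case 1
    have "rho (iter_mat S A) \<le> rho (iter_mat (tril A) A)"
      unfolding 1 stair1_eq_mask_mat tril_eq_mask_mat triu_eq_mask_mat
      by (rule rho_iter_mat_mask_mat_mono_hessenberg[OF assms(2), where p = "\<lambda>i. i div 2"];
          (unfold of_bool_def)?; presburger)
    moreover have "rho (iter_mat (triu A) A) \<le> rho (iter_mat S A)"
      unfolding 1 stair1_eq_mask_mat tril_eq_mask_mat triu_eq_mask_mat
      by (rule rho_iter_mat_mask_mat_mono_hessenberg[OF assms(2), where p = "\<lambda>i. (i + 1) div 2"];
          (unfold of_bool_def)?; presburger)
    ultimately show ?thesis by simp
  next
    case 2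
    have "rho (iter_mat S A) \<le> rho (iter_mat (tril A) A)"
      unfolding 2 stair2_eq_mask_mat tril_eq_mask_mat triu_eq_mask_mat
      by (rule rho_iter_mat_mask_mat_mono_hessenberg[OF assms(2), where p = "\<lambda>i. (i + 1) div 2"];
          (unfold of_bool_def)?; presburger)
    moreover have "rho (iter_mat (triu A) A) \<le> rho (iter_mat S A)"
      unfolding 2 stair2_eq_mask_mat tril_eq_mask_mat triu_eq_mask_mat
      by (rule rho_iter_mat_mask_mat_mono_hessenberg[OF assms(2), where p = "\<lambda>i. i div 2"];
          (unfold of_bool_def)?; presburger)
    ultimately show ?thesis by simp
  qed
qed

end
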